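(* Let $b\in\mathbb{N}\setminus\{1\}$, $\phi:\mathbb{R}\to\mathbb{R}$ periodic with period $1$, vanishing on $\mathbb{Z}$, and H\"older continuous with exponent $\gamma\in(0,1]$, and $\psi:(0,\infty)\to(0,\infty)$ submultiplicative with $\psi(b^{-1})\in(0,1)$ and $\psi(b^{-1})>b^{-\gamma}$. Fix a sign $\sigma\in\{+1,-1\}$ (corresponding to $f(t)=\sum_{m=0}^\infty\sigma\,\psi(b^{-m})\phi(b^mt)$, i.e. $\xi_m=\sigma$ for all $m$), and let $Z_n:=\sum_{m=1}^n(\sigma\psi(b^{-1})b)^{-m}Y_m$, $n\in\mathbb{N}$. Then the series $Z:=\sum_{m=1}^\infty(\sigma\psi(b^{-1})b)^{-m}Y_m$ is well-defined (converges almost surely), and for every $p>0$ the family $\{|Z_n|^p:n\in\mathbb{N}\}$ is uniformly integrable and $\mathbb{E}(|Z_n|^p)\to\mathbb{E}(|Z|^p)$ as $n\to\infty$.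
   Context: $\psi$ submultiplicative: $\psi(xy)\le\psi(x)\psi(y)$ for $x,y>0$. For $m\in\mathbb{N}$, $k\in\{0,\dots,b^m-1\}$ let $\lambda_{m,k}:=b^m(\phi((k+1)b^{-m})-\phi(kb^{-m}))$. Let $(U_n)_{n\in\mathbb{N}}$ be i.i.d. uniform on $\{0,\dots,b-1\}$, $R_m:=\sum_{i=1}^mU_ib^{i-1}$, $Y_m:=\lambda_{m,R_m}$. *)

theory Defs
  imports "HOL-Probability.Probability"
begin

definition lam :: "nat \<Rightarrow> (real \<Rightarrow> real) \<Rightarrow> nat \<Rightarrow> nat \<Rightarrow> real" where
  "lam b \<phi> m k = real b ^ m * (\<phi> ((real k + 1) / real b ^ m) - \<phi> (real k / real b ^ m))"

definition Rdig :: "nat \<Rightarrow> (nat \<Rightarrow> 'a \<Rightarrow> nat) \<Rightarrow> nat \<Rightarrow> 'a \<Rightarrow> nat" where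
  "Rdig b U m \<omega> = (\<Sum>i=1..m. U i \<omega> * b ^ (i - 1))"

definition Ymv :: "nat \<Rightarrow> (real \<Rightarrow> real) \<Rightarrow> (nat \<Rightarrow> 'a \<Rightarrow> nat) \<Rightarrow> nat \<Rightarrow> 'a \<Rightarrow> real" where
  "Ymv b \<phi> U m \<omega> = lam b \<phi> m (Rdig b U m \<omega>)"

definition unif_integrable :: "'a measure \<Rightarrow> ('i \<Rightarrow> 'a \<Rightarrow> real) \<Rightarrow> 'i set \<Rightarrow> bool" where
  "unif_integrable M X I \<longleftrightarrow>
     (\<forall>i\<in>I. integrable M (X i)) \<and>
     (\<forall>e>0. \<exists>K. \<forall>i\<in>I. (LINT x|M. \<bar>X i x\<bar> * indicator {x \<in> space M. K < \<bar>X i x\<bar>} x) \<le> e)"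

end

theory Submission
  imports Defs
begin

text \<open>By Hoelder continuity of \<open>\<phi>\<close> every increment \<open>\<lambda>\<^sub>m\<^sub>,\<^sub>k\<close> is at most \<open>C b\<^sup>m\<^sup>(\<^sup>1\<^sup>-\<^sup>\<gamma>\<^sup>)\<close>, so the
  \<open>m\<close>-th summand of \<open>Z\<close> is at most \<open>C q\<^sup>m\<close> with \<open>q = b\<^sup>-\<^sup>\<gamma> / \<psi>(1/b) < 1\<close>. Hence the series
  converges everywhere and all \<open>Z\<^sub>n\<close> are bounded by one constant: uniform integrability is
  immediate and the moments converge by dominated convergence.\<close>

lemma abs_lam_le:
  assumes b: "b > 0" and hoelder: "\<forall>x y. \<bar>\<phi> x - \<phi> y\<bar> \<le> C * \<bar>x - y\<bar> powr \<gamma>"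
  shows "\<bar>lam b \<phi> m k\<bar> \<le> \<bar>C\<bar> * (real b powr (1 - \<gamma>)) ^ m"
proof -
  have bp: "real b ^ m > 0" using b by simp
  have "\<bar>lam b \<phi> m k\<bar> = real b ^ m * \<bar>\<phi> ((real k + 1) / real b ^ m) - \<phi> (real k / real b ^ m)\<bar>"
    unfolding lam_def using bp by (simp add: abs_mult)
  also have "\<dots> \<le> real b ^ m * (C * \<bar>(real k + 1) / real b ^ m - real k / real b ^ m\<bar> powr \<gamma>)"
    using hoelder bp by (intro mult_left_mono) auto
  also have "\<bar>(real k + 1) / real b ^ m - real k / real b ^ m\<bar> = 1 / real b ^ m"
    using bp by (simp add: field_simps)
  also have "(1 / real b ^ m) powr \<gamma> = (real b powr (-\<gamma>)) ^ m"
    using b by (simp add: powr_divide powr_realpow[symmetric] powr_powr powr_minus_divide powr_power mult.commute)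
  also have "real b ^ m * (C * (real b powr (-\<gamma>)) ^ m) \<le> real b ^ m * (\<bar>C\<bar> * (real b powr (-\<gamma>)) ^ m)"
    using bp by (intro mult_left_mono mult_right_mono) auto
  also have "\<dots> = \<bar>C\<bar> * (real b * real b powr (-\<gamma>)) ^ m"
    by (simp add: power_mult_distrib)
  also have "real b * real b powr (-\<gamma>) = real b powr (1 - \<gamma>)"
    using b by (simp add: powr_diff powr_minus divide_inverse)
  finally show ?thesis .
qed

lemma abs_scaled_lam_le:
  assumes b: "b > 0" and hoelder: "\<forall>x y. \<bar>\<phi> x - \<phi> y\<bar> \<le> C * \<bar>x - y\<bar> powr \<gamma>"
    and c: "c > 0" and \<sigma>: "\<bar>\<sigma>\<bar> = 1"
  shows "\<bar>(1 / (\<sigma> * c * real b)) ^ m * lam b \<phi> m k\<bar> \<le> \<bar>C\<bar> * (real b powr (-\<gamma>) / c) ^ m"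
proof -
  have "\<bar>(1 / (\<sigma> * c * real b)) ^ m * lam b \<phi> m k\<bar> = (1 / (c * real b)) ^ m * \<bar>lam b \<phi> m k\<bar>"
    using \<sigma> c b by (simp add: abs_mult power_abs)
  also have "\<dots> \<le> (1 / (c * real b)) ^ m * (\<bar>C\<bar> * (real b powr (1 - \<gamma>)) ^ m)"
    using abs_lam_le[OF b hoelder] c b by (intro mult_left_mono) auto
  also have "\<dots> = \<bar>C\<bar> * (real b powr (1 - \<gamma>) / (c * real b)) ^ m"
    by (simp add: power_divide field_simps)
  also have "real b powr (1 - \<gamma>) / (c * real b) = real b powr (-\<gamma>) / c"
    using b c by (simp add: powr_diff powr_minus field_simps)
  finally show ?thesis .
qed

lemma Rdig_measurable:
  assumes "\<And>i. i \<ge> 1 \<Longrightarrow> U i \<in> measurable M (count_space UNIV)"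
  shows "Rdig b U m \<in> measurable M (count_space UNIV)"
proof (induction m)
  case 0
  then show ?case by (simp add: Rdig_def)
next
  case (Suc m)
  have "(\<lambda>\<omega>. Rdig b U m \<omega> + U (Suc m) \<omega> * b ^ m) \<in> measurable M (count_space UNIV)"
  proof (rule measurable_compose_countable[where f="\<lambda>i \<omega>. Rdig b U m \<omega> + i * b ^ m"])
    fix i :: nat
    show "(\<lambda>\<omega>. Rdig b U m \<omega> + i * b ^ m) \<in> measurable M (count_space UNIV)"
      using measurable_compose[OF Suc, of "\<lambda>j. j + i * b ^ m" "count_space UNIV"] by simp
  qed (use assms in auto)
  moreover have "Rdig b U (Suc m) = (\<lambda>\<omega>. Rdig b U m \<omega> + U (Suc m) \<omega> * b ^ m)"
    by (simp add: Rdig_def fun_eq_iff)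
  ultimately show ?case by simp
qed

lemma Ymv_borel_measurable:
  assumes "\<And>i. i \<ge> 1 \<Longrightarrow> U i \<in> measurable M (count_space UNIV)"
  shows "Ymv b \<phi> U m \<in> borel_measurable M"
  unfolding Ymv_def
  using measurable_compose_countable[where f="\<lambda>k \<omega>. lam b \<phi> m k" and g="Rdig b U m" and N=borel]
    Rdig_measurable[OF assms] by auto

lemma
  fixes a :: "nat \<Rightarrow> real"
  assumes a: "\<And>m. \<bar>a m\<bar> \<le> c * q ^ m" and q: "0 \<le> q" "q < 1"
  shows convergent_geometric_dominated_sums: "convergent (\<lambda>n. \<Sum>m=1..n. a m)"
    and abs_geometric_dominated_sum_le: "\<bar>\<Sum>m=1..n. a m\<bar> \<le> c / (1 - q)"
proof -
  have "(\<lambda>m. q ^ m) sums (1 / (1 - q))"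
    using q by (intro geometric_sums) simp
  then have geometric: "(\<lambda>m. c * q ^ m) sums (c / (1 - q))"
    using sums_mult by fastforce
  have "summable a"
    using a summable_comparison_test' geometric by (metis real_norm_def sums_summable)
  then have "convergent (\<lambda>n. (\<Sum>m\<le>n. a m) - a 0)"
    by (simp add: summable_iff_convergent' convergent_diff_const_right_iff)
  moreover have "(\<Sum>m=1..n. a m) = (\<Sum>m\<le>n. a m) - a 0" for n
    by (simp add: atMost_atLeast0 sum.atLeast_Suc_atMost)
  ultimately show "convergent (\<lambda>n. \<Sum>m=1..n. a m)"
    by simp
  have "\<bar>\<Sum>m=1..n. a m\<bar> \<le> (\<Sum>m=1..n. c * q ^ m)"
    using a by (intro sum_abs[THEN order_trans] sum_mono)
  also have "\<dots> \<le> (\<Sum>m. c * q ^ m)"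
    using geometric a[of 0] q by (intro sum_le_suminf) (auto simp: sums_iff)
  also have "\<dots> = c / (1 - q)"
    using geometric by (simp add: sums_iff)
  finally show "\<bar>\<Sum>m=1..n. a m\<bar> \<le> c / (1 - q)" .
qed

lemma (in finite_measure) unif_integrable_bounded:
  assumes "\<And>i. i \<in> I \<Longrightarrow> X i \<in> borel_measurable M"
    and bound: "\<And>i x. i \<in> I \<Longrightarrow> x \<in> space M \<Longrightarrow> \<bar>X i x\<bar> \<le> B"
  shows "unif_integrable M X I"
  unfolding unif_integrable_def
proof (intro conjI ballI allI impI exI)
  show "integrable M (X i)" if "i \<in> I" for i
    using that assms by (intro integrable_const_bound[where B=B]) auto
  fix e :: real and i assume "e > 0" "i \<in> I"
  then have "(LINT x|M. \<bar>X i x\<bar> * indicator {x \<in> space M. B < \<bar>X i x\<bar>} x) = (LINT x|M. 0)"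
    using bound by (intro Bochner_Integration.integral_cong) (auto simp: indicator_def not_less)
  then show "(LINT x|M. \<bar>X i x\<bar> * indicator {x \<in> space M. B < \<bar>X i x\<bar>} x) \<le> e"
    using \<open>e > 0\<close> by simp
qed

lemma (in finite_measure) moments_tendsto_of_bounded_convergent:
  fixes Z :: "nat \<Rightarrow> 'a \<Rightarrow> real"
  assumes meas: "\<And>n. Z n \<in> borel_measurable M"
    and bound: "\<And>n x. x \<in> space M \<Longrightarrow> \<bar>Z n x\<bar> \<le> B"
    and conv: "\<And>x. x \<in> space M \<Longrightarrow> convergent (\<lambda>n. Z n x)"
    and p: "p > 0"
  shows "(\<lambda>n. LINT x|M. \<bar>Z n x\<bar> powr p) \<longlonglongrightarrow> (LINT x|M. \<bar>lim (\<lambda>n. Z n x)\<bar> powr p)"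
proof (rule integral_dominated_convergence[where w="\<lambda>_. B powr p"])
  show "AE x in M. (\<lambda>n. \<bar>Z n x\<bar> powr p) \<longlonglongrightarrow> \<bar>lim (\<lambda>n. Z n x)\<bar> powr p"
    using conv p by (intro AE_I2 tendsto_powr' tendsto_rabs) (auto simp: convergent_LIMSEQ_iff)
  show "AE x in M. norm (\<bar>Z n x\<bar> powr p) \<le> B powr p" for n
    using bound p by (intro AE_I2) (simp add: powr_mono2)
qed (use meas in measurable)

theorem lemma3p1:
  fixes M :: "'a measure" and b :: nat and \<phi> :: "real \<Rightarrow> real" and \<gamma> :: real
    and \<psi> :: "real \<Rightarrow> real" and \<sigma> :: real and U :: "nat \<Rightarrow> 'a \<Rightarrow> nat"
  assumes "prob_space M"
    and b: "b \<ge> 2"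
    and per: "\<And>x. \<phi> (x + 1) = \<phi> x"
    and vanish: "\<And>k::int. \<phi> (of_int k) = 0"
    and gamma: "0 < \<gamma>" "\<gamma> \<le> 1"
    and hoelder: "\<exists>C. \<forall>x y. \<bar>\<phi> x - \<phi> y\<bar> \<le> C * \<bar>x - y\<bar> powr \<gamma>"
    and psi_pos: "\<And>x. x > 0 \<Longrightarrow> \<psi> x > 0"
    and psi_submult: "\<And>x y. x > 0 \<Longrightarrow> y > 0 \<Longrightarrow> \<psi> (x * y) \<le> \<psi> x * \<psi> y"
    and psi_b: "0 < \<psi> (1 / real b)" "\<psi> (1 / real b) < 1"
    and psi_gamma: "\<psi> (1 / real b) > real b powr (- \<gamma>)"
    and sigma: "\<sigma> = 1 \<or> \<sigma> = -1"
    and indep: "prob_space.indep_vars M (\<lambda>_. count_space UNIV) U {1..}"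
    and unif: "\<And>i. i \<ge> 1 \<Longrightarrow> distr M (count_space UNIV) (U i) = measure_pmf (pmf_of_set {..<b})"
  defines "Z \<equiv> \<lambda>n \<omega>. \<Sum>m=1..n. (1 / (\<sigma> * \<psi> (1 / real b) * real b)) ^ m * Ymv b \<phi> U m \<omega>"
  shows "(AE \<omega> in M. convergent (\<lambda>n. Z n \<omega>))
       \<and> (\<forall>p>0. unif_integrable M (\<lambda>n \<omega>. \<bar>Z n \<omega>\<bar> powr p) {1..}
                \<and> (\<lambda>n. LINT \<omega>|M. \<bar>Z n \<omega>\<bar> powr p)
                    \<longlonglongrightarrow> (LINT \<omega>|M. \<bar>lim (\<lambda>n. Z n \<omega>)\<bar> powr p))"
proof -
  interpret prob_space M by fact
  obtain C where C: "\<forall>x y. \<bar>\<phi> x - \<phi> y\<bar> \<le> C * \<bar>x - y\<bar> powr \<gamma>" using hoelder by blast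
  define q where "q = real b powr (-\<gamma>) / \<psi> (1 / real b)"
  have q: "0 \<le> q" "q < 1" using psi_b psi_gamma by (simp_all add: q_def)
  have summand: "\<bar>(1 / (\<sigma> * \<psi> (1 / real b) * real b)) ^ m * Ymv b \<phi> U m \<omega>\<bar> \<le> \<bar>C\<bar> * q ^ m" for m \<omega>
    unfolding Ymv_def q_def using b psi_b sigma by (intro abs_scaled_lam_le C) auto
  have conv: "convergent (\<lambda>n. Z n \<omega>)" for \<omega>
    unfolding Z_def using summand q by (rule convergent_geometric_dominated_sums)
  have bound: "\<bar>Z n \<omega>\<bar> \<le> \<bar>C\<bar> / (1 - q)" for n \<omega>
    unfolding Z_def using summand q by (rule abs_geometric_dominated_sum_le)
  have "U i \<in> measurable M (count_space UNIV)" if "i \<ge> 1" for i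
    using indep that unfolding indep_vars_def by auto
  then have meas: "Z n \<in> borel_measurable M" for n
    unfolding Z_def using Ymv_borel_measurable by measurable
  have "unif_integrable M (\<lambda>n \<omega>. \<bar>Z n \<omega>\<bar> powr p) {1..}" if "p > 0" for p
    using meas bound that by (intro unif_integrable_bounded[where B="(\<bar>C\<bar> / (1 - q)) powr p"])
      (auto intro: powr_mono2)
  then show ?thesis
    using conv meas bound by (auto intro!: moments_tendsto_of_bounded_convergent)
qed

end
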